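(* Let $X$ be a topological space that has a $\pi$-tree and let $C\subseteq X$ be at most countable. Then the subspace $X\setminus C$ has a $\pi$-tree.
   Context: A tree is a pair $\mathcal T=(Q,<)$ where $<$ is an irreflexive transitive relation on $Q$ such that for every $x\in Q$ the set $\{v\in Q:v<x\}$ is well-ordered by $<$. $\mathrm{sons}(x)=\{s: x<s$ and there is no $v$ with $x<v<s\}$. A branch is an inclusion-maximal set of pairwise comparable nodes. A foliage tree is a pair $\mathbf F=(\mathcal T,l)$ with $\mathcal T$ a tree (the skeleton) and $l$ a function on its nodes; $\mathbf F_x:=l(x)$ is the leaf at $x$. $\mathrm{fruit}_{\mathbf F}(A)=\bigcap_{x\in A}\mathbf F_x$; $\mathrm{shoot}_{\mathbf F}(z)=\{\bigcup_{s\in C'}\mathbf F_s: C'$ cofinite in $\mathrm{sons}(z)\}$; $\mathrm{scope}_{\mathbf F}(p)=\{y:p\in\mathbf F_y\}$; $\gamma\gg\delta$ means every nonempty $D\in\delta$ contains some nonempty $G\in\gamma$. A Baire foliage tree on a space $X$ is a foliage tree whose skeleton is isomorphic to $(\omega^{<\omega},\subsetneq)$, all of whose leaves are open in $X$, which is locally strict (for each non-maximal $x$, $\mathbf F_x$ is the disjoint union of $\mathbf F_s$, $s\in\mathrm{sons}(x)$), has strict branches (fruit of every branch is a singleton), and whose leaf at the least node is $X$. It grows into $X$ if for every $p\in X$ and every neighbourhood $U$ of $p$ there is $z\in\mathrm{scope}_{\mathbf F}(p)$ with $\mathrm{shoot}_{\mathbf F}(z)\gg\{U\}$. A $\pi$-tree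 on $X$ is a Baire foliage tree on $X$ that grows into $X$. *)

theory Defs
  imports "HOL-Analysis.Analysis" "HOL-Library.Sublist"
begin

definition is_tree :: "'n set \<Rightarrow> ('n \<Rightarrow> 'n \<Rightarrow> bool) \<Rightarrow> bool" where
  "is_tree Q lt \<longleftrightarrow>
     (\<forall>x\<in>Q. \<not> lt x x) \<and>
     (\<forall>x\<in>Q. \<forall>y\<in>Q. \<forall>z\<in>Q. lt x y \<and> lt y z \<longrightarrow> lt x z) \<and>
     (\<forall>x\<in>Q. let P = {v\<in>Q. lt v x} in
        (\<forall>u\<in>P. \<forall>v\<in>P. u \<noteq> v \<longrightarrow> lt u v \<or> lt v u) \<and>
        wf {(u, v). u \<in> P \<and> v \<in> P \<and> lt u v})"

definition sons :: "'n set \<Rightarrow> ('n \<Rightarrow> 'n \<Rightarrow> bool) \<Rightarrow> 'n \<Rightarrow> 'n set" where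
  "sons Q lt x = {s\<in>Q. lt x s \<and> \<not> (\<exists>v\<in>Q. lt x v \<and> lt v s)}"

definition branch :: "'n set \<Rightarrow> ('n \<Rightarrow> 'n \<Rightarrow> bool) \<Rightarrow> 'n set \<Rightarrow> bool" where
  "branch Q lt B \<longleftrightarrow>
     B \<subseteq> Q \<and> (\<forall>x\<in>B. \<forall>y\<in>B. x \<noteq> y \<longrightarrow> lt x y \<or> lt y x) \<and>
     (\<forall>B'. B \<subseteq> B' \<and> B' \<subseteq> Q \<and> (\<forall>x\<in>B'. \<forall>y\<in>B'. x \<noteq> y \<longrightarrow> lt x y \<or> lt y x)
        \<longrightarrow> B' = B)"

definition fruit :: "('n \<Rightarrow> 'a set) \<Rightarrow> 'n set \<Rightarrow> 'a set" where
  "fruit l A = (\<Inter>x\<in>A. l x)"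

definition shoot :: "'n set \<Rightarrow> ('n \<Rightarrow> 'n \<Rightarrow> bool) \<Rightarrow> ('n \<Rightarrow> 'a set) \<Rightarrow> 'n \<Rightarrow> 'a set set" where
  "shoot Q lt l z =
     {(\<Union>s\<in>C'. l s) | C'. C' \<subseteq> sons Q lt z \<and> finite (sons Q lt z - C')}"

definition scope :: "'n set \<Rightarrow> ('n \<Rightarrow> 'a set) \<Rightarrow> 'a \<Rightarrow> 'n set" where
  "scope Q l p = {y\<in>Q. p \<in> l y}"

definition refines :: "'a set set \<Rightarrow> 'a set set \<Rightarrow> bool" (infix "\<ggreater>" 50) where
  "\<gamma> \<ggreater> \<delta> \<longleftrightarrow> (\<forall>D\<in>\<delta>. D \<noteq> {} \<longrightarrow> (\<exists>G\<in>\<gamma>. G \<noteq> {} \<and> G \<subseteq> D))"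

definition baire_foliage_tree ::
  "'a topology \<Rightarrow> 'n set \<Rightarrow> ('n \<Rightarrow> 'n \<Rightarrow> bool) \<Rightarrow> ('n \<Rightarrow> 'a set) \<Rightarrow> bool" where
  "baire_foliage_tree X Q lt l \<longleftrightarrow>
     is_tree Q lt \<and>
     (\<exists>f :: nat list \<Rightarrow> 'n. bij_betw f UNIV Q \<and>
        (\<forall>u v. lt (f u) (f v) \<longleftrightarrow> strict_prefix u v)) \<and>
     (\<forall>x\<in>Q. openin X (l x)) \<and>
     (\<forall>x\<in>Q. (\<exists>y\<in>Q. lt x y) \<longrightarrow>
        l x = (\<Union>s\<in>sons Q lt x. l s) \<and> disjoint_family_on l (sons Q lt x)) \<and>
     (\<forall>B. branch Q lt B \<longrightarrow> (\<exists>p. fruit l B = {p})) \<and>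
     (\<forall>x\<in>Q. (\<forall>y\<in>Q. y \<noteq> x \<longrightarrow> lt x y) \<longrightarrow> l x = topspace X)"

definition grows_into ::
  "'a topology \<Rightarrow> 'n set \<Rightarrow> ('n \<Rightarrow> 'n \<Rightarrow> bool) \<Rightarrow> ('n \<Rightarrow> 'a set) \<Rightarrow> bool" where
  "grows_into X Q lt l \<longleftrightarrow>
     (\<forall>p\<in>topspace X. \<forall>U. openin X U \<and> p \<in> U \<longrightarrow>
        (\<exists>z\<in>scope Q l p. shoot Q lt l z \<ggreater> {U}))"

definition pi_tree ::
  "'a topology \<Rightarrow> 'n set \<Rightarrow> ('n \<Rightarrow> 'n \<Rightarrow> bool) \<Rightarrow> ('n \<Rightarrow> 'a set) \<Rightarrow> bool" where
  "pi_tree X Q lt l \<longleftrightarrow> baire_foliage_tree X Q lt l \<and> grows_into X Q lt l"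

text \<open>Since every pi-tree has a countable skeleton, we may take nodes from nat list.\<close>
definition has_pi_tree :: "'a topology \<Rightarrow> bool" where
  "has_pi_tree X \<longleftrightarrow> (\<exists>(Q :: nat list set) lt l. pi_tree X Q lt l)"

end

theory Submission
  imports Defs
begin

text \<open>
  Index the nodes of a \<open>\<pi>\<close>-tree by finite sequences of natural numbers and enumerate \<open>C\<close> as
  \<open>e\<^sub>0, e\<^sub>1, \<dots>\<close>. At an original node \<open>u\<close> whose leaf meets \<open>C\<close>,
  let \<open>c\<close> be the point of \<open>C \<inter> L u\<close> of least index: \<open>L u - {c}\<close> is the disjoint union of the
  leaves branching off the branch of \<open>c\<close> below \<open>u\<close>, one for every level \<open>k\<close> and sibling index
  \<open>i\<close>. This \<open>\<nat> \<times> \<nat>\<close>-indexed family is regrouped into chains of auxiliary nodes, so that every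
  node is again \<open>\<omega>\<close>-branching and all but one son of an auxiliary node are original nodes of one
  level; the latter keeps the growth condition alive. Along every branch of the new tree original
  nodes recur, so the branch refines an old branch and shrinks to its point, and each \<open>e\<^sub>k\<close> is cut
  out after finitely many steps, so that point is not in \<open>C\<close>.
\<close>

section \<open>The tree of finite sequences\<close>

lemma strict_prefix_immediate_iff:
  "(strict_prefix u v \<and> \<not> (\<exists>y. strict_prefix u y \<and> strict_prefix y v)) \<longleftrightarrow> (\<exists>n. v = u @ [n])"
proof
  assume H: "strict_prefix u v \<and> \<not> (\<exists>y. strict_prefix u y \<and> strict_prefix y v)"
  then obtain a t where v: "v = u @ a # t" unfolding strict_prefix_def prefix_def
    by (metis append_Nil2 neq_Nil_conv)
  have "t = []"
  proof (rule ccontr)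
    assume "t \<noteq> []"
    then have "strict_prefix u (u @ [a]) \<and> strict_prefix (u @ [a]) v"
      using v by (simp add: strict_prefix_def prefix_def)
    then show False using H by blast
  qed
  then show "\<exists>n. v = u @ [n]" using v by blast
next
  assume "\<exists>n. v = u @ [n]"
  then obtain n where v: "v = u @ [n]" by blast
  have "\<not> strict_prefix y v" if "strict_prefix u y" for y
    using prefix_length_less[OF that] prefix_length_less[of y v] v by auto
  then show "strict_prefix u v \<and> \<not> (\<exists>y. strict_prefix u y \<and> strict_prefix y v)"
    using v by (auto simp: strict_prefix_def prefix_def)
qed

lemma sons_strict_prefix: "sons UNIV strict_prefix u = range (\<lambda>n. u @ [n :: 'a])"
  using strict_prefix_immediate_iff[of u] unfolding sons_def by auto

lemma is_tree_strict_prefix: "is_tree UNIV (strict_prefix :: 'a list \<Rightarrow> _)"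
proof -
  have "wf {(u, v). strict_prefix u x \<and> strict_prefix v x \<and> strict_prefix u v}" for x :: "'a list"
    by (rule wf_subset[OF wf_measure[of length]]) (auto dest!: prefix_length_less)
  moreover have "strict_prefix u v \<or> strict_prefix v u"
    if "strict_prefix u x" "strict_prefix v x" "u \<noteq> v" for u v x :: "'a list"
    using that by (auto simp: strict_prefix_def dest: prefix_same_cases)
  ultimately show ?thesis unfolding is_tree_def Let_def by (auto dest: prefix_order.less_trans)
qed

definition seq_take :: "nat \<Rightarrow> (nat \<Rightarrow> 'a) \<Rightarrow> 'a list" where
  "seq_take n \<alpha> = map \<alpha> [0..<n]"

lemma length_seq_take [simp]: "length (seq_take n \<alpha>) = n"
  by (simp add: seq_take_def)

lemma seq_take_0 [simp]: "seq_take 0 \<alpha> = []"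
  by (simp add: seq_take_def)

lemma seq_take_Suc: "seq_take (Suc n) \<alpha> = seq_take n \<alpha> @ [\<alpha> n]"
  by (simp add: seq_take_def)

lemma nth_seq_take: "i < n \<Longrightarrow> seq_take n \<alpha> ! i = \<alpha> i"
  by (simp add: seq_take_def)

lemma prefix_seq_take: "m \<le> n \<Longrightarrow> prefix (seq_take m \<alpha>) (seq_take n \<alpha>)"
  unfolding seq_take_def prefix_def by (metis le_add_diff_inverse map_append upt_add_eq_append zero_le)

lemma seq_take_nth: "seq_take (length w) ((!) w) = w"
  by (simp add: list_eq_iff_nth_eq nth_seq_take)

lemma chain_seq_take:
  "x \<in> range (\<lambda>n. seq_take n \<alpha>) \<Longrightarrow> y \<in> range (\<lambda>n. seq_take n \<alpha>) \<Longrightarrow> x \<noteq> y \<Longrightarrow>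
     strict_prefix x y \<or> strict_prefix y x"
  by (auto simp: strict_prefix_def) (metis nat_le_linear prefix_seq_take)

lemma chain_eq_seq_take:
  assumes "\<forall>x\<in>B. \<forall>y\<in>B. x \<noteq> y \<longrightarrow> strict_prefix x y \<or> strict_prefix y x"
  obtains \<alpha> where "\<forall>v\<in>B. v = seq_take (length v) \<alpha>"
proof
  define \<alpha> where "\<alpha> i = (SOME v. v \<in> B \<and> i < length v) ! i" for i
  show "\<forall>v\<in>B. v = seq_take (length v) \<alpha>"
  proof
    fix v assume vB: "v \<in> B"
    have "v ! i = \<alpha> i" if i: "i < length v" for i
    proof -
      define v' where "v' = (SOME v. v \<in> B \<and> i < length v)"
      have v': "v' \<in> B" "i < length v'"
        using someI[of "\<lambda>v. v \<in> B \<and> i < length v"] vB i unfolding v'_def by blast+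
      have "prefix v v' \<or> prefix v' v"
        using assms v' vB by (metis prefix_order.order_refl strict_prefix_def)
      then show ?thesis using i v'(2) unfolding \<alpha>_def v'_def[symmetric] by (metis nth_append prefix_def)
    qed
    then show "v = seq_take (length v) \<alpha>" by (simp add: list_eq_iff_nth_eq nth_seq_take)
  qed
qed

lemma branch_strict_prefix:
  assumes "branch UNIV strict_prefix B"
  obtains \<alpha> where "B = range (\<lambda>n. seq_take n \<alpha>)"
proof -
  have chain: "\<forall>x\<in>B. \<forall>y\<in>B. x \<noteq> y \<longrightarrow> strict_prefix x y \<or> strict_prefix y x"
    using assms unfolding branch_def by auto
  obtain \<alpha> where "\<forall>v\<in>B. v = seq_take (length v) \<alpha>" using chain_eq_seq_take[OF chain] by blast
  then have "B \<subseteq> range (\<lambda>n. seq_take n \<alpha>)" by blast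
  moreover have "\<forall>x\<in>range (\<lambda>n. seq_take n \<alpha>). \<forall>y\<in>range (\<lambda>n. seq_take n \<alpha>).
      x \<noteq> y \<longrightarrow> strict_prefix x y \<or> strict_prefix y x"
    using chain_seq_take by blast
  ultimately have "range (\<lambda>n. seq_take n \<alpha>) = B"
    using assms unfolding branch_def by (metis subset_UNIV)
  then show thesis using that by metis
qed

lemma prefix_nth_eq: "prefix xs ys \<Longrightarrow> i < length xs \<Longrightarrow> xs ! i = ys ! i"
  by (auto simp: prefix_def nth_append)

definition skip :: "nat \<Rightarrow> nat \<Rightarrow> nat" where
  "skip a i = (if i < a then i else Suc i)"

lemma skip_neq: "skip a i \<noteq> a"
  by (simp add: skip_def)

lemma inj_skip: "inj (skip a)"
  by (auto simp: skip_def inj_def)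

lemma skip_surj: "m \<noteq> a \<Longrightarrow> \<exists>i. skip a i = m"
  unfolding skip_def by (cases "m < a") (auto intro: exI[of _ "m - 1"])

section \<open>Baire foliage trees indexed by finite sequences\<close>

locale list_foliage =
  fixes X :: "'a topology" and L :: "nat list \<Rightarrow> 'a set"
  assumes leaf_open: "openin X (L u)"
    and leaf_root: "L [] = topspace X"
    and leaf_split: "L u = (\<Union>n. L (u @ [n]))"
    and leaf_disjoint: "n \<noteq> m \<Longrightarrow> L (u @ [n]) \<inter> L (u @ [m]) = {}"
    and branch_singleton: "\<exists>p. (\<Inter>n. L (seq_take n \<alpha>)) = {p}"
    and leaf_grows: "openin X U \<Longrightarrow> p \<in> U \<Longrightarrow>
      \<exists>u F. p \<in> L u \<and> finite F \<and> (\<forall>n. n \<notin> F \<longrightarrow> L (u @ [n]) \<subseteq> U)"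
begin

lemma leaf_snoc_subset: "L (u @ [n]) \<subseteq> L u"
  using leaf_split[of u] by blast

lemma leaf_antimono: "prefix u v \<Longrightarrow> L v \<subseteq> L u"
proof -
  assume "prefix u v"
  then obtain w where v: "v = u @ w" by (auto simp: prefix_def)
  have "L (u @ w) \<subseteq> L u"
  proof (induction w rule: rev_induct)
    case (snoc x xs)
    then show ?case using leaf_snoc_subset[of "u @ xs" x] by auto
  qed simp
  then show ?thesis using v by simp
qed

lemma leaf_subset_topspace: "L u \<subseteq> topspace X"
  using leaf_antimono[of "[]" u] leaf_root by simp

lemma leaf_parallel_disjoint: "u \<parallel> v \<Longrightarrow> L u \<inter> L v = {}"
proof -
  assume "u \<parallel> v"
  then obtain as b bs c cs where h: "b \<noteq> c" "u = as @ b # bs" "v = as @ c # cs"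
    using parallel_decomp by blast
  have "L u \<subseteq> L (as @ [b])" "L v \<subseteq> L (as @ [c])"
    using h(2,3) leaf_antimono[of "as @ [b]" u] leaf_antimono[of "as @ [c]" v] by simp_all
  then show ?thesis using leaf_disjoint[OF h(1), of as] by blast
qed

lemma leaf_comparable: "p \<in> L u \<Longrightarrow> p \<in> L v \<Longrightarrow> prefix u v \<or> prefix v u"
  using leaf_parallel_disjoint[of u v] parallelI[of u v] by blast

lemma leaf_unique: "p \<in> L u \<Longrightarrow> p \<in> L v \<Longrightarrow> length u = length v \<Longrightarrow> u = v"
  using leaf_comparable[of p u v] by (auto simp: prefix_def)

lemma ex_leaf_length: "p \<in> topspace X \<Longrightarrow> \<exists>v. length v = n \<and> p \<in> L v"
proof (induction n)
  case 0
  then show ?case using leaf_root by auto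
next
  case (Suc n)
  then obtain v where "length v = n" "p \<in> L v" by blast
  moreover obtain m where "p \<in> L (v @ [m])" using calculation(2) leaf_split[of v] by blast
  ultimately show ?case by (intro exI[of _ "v @ [m]"]) simp
qed

text \<open>The sequence of sons along which a point descends through the tree.\<close>

definition address :: "'a \<Rightarrow> nat \<Rightarrow> nat" where
  "address p i = (THE v. length v = Suc i \<and> p \<in> L v) ! i"

lemma the_leaf_length:
  assumes "p \<in> topspace X"
  shows "length (THE v. length v = n \<and> p \<in> L v) = n \<and> p \<in> L (THE v. length v = n \<and> p \<in> L v)"
proof (rule theI')
  obtain w where w: "length w = n" "p \<in> L w" using ex_leaf_length[OF assms] by blast
  show "\<exists>!v. length v = n \<and> p \<in> L v"
    by (rule ex1I[of _ w]) (use w leaf_unique in auto)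
qed

lemma seq_take_address:
  assumes "p \<in> L u"
  shows "seq_take (length u) (address p) = u"
proof (rule nth_equalityI)
  fix i assume "i < length (seq_take (length u) (address p))"
  then have i: "i < length u" by simp
  have p: "p \<in> topspace X" using assms leaf_subset_topspace by blast
  define v where "v = (THE v. length v = Suc i \<and> p \<in> L v)"
  have v: "length v = Suc i" "p \<in> L v" using the_leaf_length[OF p] unfolding v_def by blast+
  have "prefix v u \<or> prefix u v" using leaf_comparable[OF v(2) assms] .
  moreover have "length v \<le> length u" using i v(1) by simp
  ultimately have "prefix v u" using prefix_length_prefix[OF prefix_order.refl[of v], of u] by blast
  have "address p i = v ! i" unfolding address_def v_def ..
  also have "\<dots> = u ! i" using prefix_nth_eq[OF \<open>prefix v u\<close>] v(1) by simp
  finally show "seq_take (length u) (address p) ! i = u ! i" using i by (simp add: nth_seq_take)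
qed simp

lemma leaf_address:
  assumes "p \<in> topspace X"
  shows "p \<in> L (seq_take n (address p))"
proof -
  obtain w where w: "length w = n" "p \<in> L w" using ex_leaf_length[OF assms] by blast
  then show ?thesis using seq_take_address[OF w(2)] by simp
qed

lemma Inter_leaf_address:
  assumes "p \<in> topspace X"
  shows "(\<Inter>n. L (seq_take n (address p))) = {p}"
proof -
  obtain q where "(\<Inter>n. L (seq_take n (address p))) = {q}" using branch_singleton by blast
  moreover have "p \<in> (\<Inter>n. L (seq_take n (address p)))" using leaf_address[OF assms] by blast
  ultimately show ?thesis by simp
qed

text \<open>
  The spine of \<open>c\<close> below \<open>u\<close> is the branch of \<open>c\<close> from \<open>u\<close> on; the offshoots are the sons of
  spine nodes off the spine, the \<open>i\<close>-th one at level \<open>k\<close> skipping the son the spine continues to.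
\<close>

definition spine :: "'a \<Rightarrow> nat list \<Rightarrow> nat \<Rightarrow> nat list" where
  "spine c u k = seq_take (length u + k) (address c)"

definition offshoot :: "'a \<Rightarrow> nat list \<Rightarrow> nat \<Rightarrow> nat \<Rightarrow> nat list" where
  "offshoot c u k i = spine c u k @ [skip (address c (length u + k)) i]"

lemma length_spine [simp]: "length (spine c u k) = length u + k"
  by (simp add: spine_def)

lemma spine_0: "c \<in> L u \<Longrightarrow> spine c u 0 = u"
  by (simp add: spine_def seq_take_address)

lemma spine_Suc: "spine c u (Suc k) = spine c u k @ [address c (length u + k)]"
  by (simp add: spine_def seq_take_Suc)

lemma prefix_spine: "k \<le> k' \<Longrightarrow> prefix (spine c u k) (spine c u k')"
  by (simp add: spine_def prefix_seq_take)

lemma leaf_spine: "c \<in> topspace X \<Longrightarrow> c \<in> L (spine c u k)"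
  by (simp add: spine_def leaf_address)

lemma leaf_spine_subset: "c \<in> L u \<Longrightarrow> L (spine c u k) \<subseteq> L u"
  using leaf_antimono[OF prefix_spine[of 0 k c u]] spine_0 by simp

lemma leaf_offshoot_subset: "L (offshoot c u k i) \<subseteq> L (spine c u k)"
  unfolding offshoot_def by (rule leaf_snoc_subset)

lemma leaf_offshoot_disjoint_spine: "L (offshoot c u k i) \<inter> L (spine c u (Suc k)) = {}"
  unfolding offshoot_def spine_Suc by (rule leaf_disjoint[OF skip_neq])

lemma point_notin_offshoot: "c \<in> topspace X \<Longrightarrow> c \<notin> L (offshoot c u k i)"
  using leaf_offshoot_disjoint_spine leaf_spine by blast

lemma leaf_offshoot_disjoint:
  assumes "(k, i) \<noteq> (k', i')"
  shows "L (offshoot c u k i) \<inter> L (offshoot c u k' i') = {}"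
proof -
  have below: "L (offshoot c u k' i') \<subseteq> L (spine c u (Suc k))" if "k < k'" for k k' i i'
    using leaf_offshoot_subset[of c u k' i'] leaf_antimono[OF prefix_spine[OF Suc_leI[OF that]]] by blast
  consider "k < k'" | "k' < k" | "k = k'" "i \<noteq> i'" using assms nat_neq_iff by blast
  then show ?thesis
  proof cases
    case 1
    then show ?thesis using below leaf_offshoot_disjoint_spine by blast
  next
    case 2
    then show ?thesis using below leaf_offshoot_disjoint_spine by blast
  next
    case 3
    then show ?thesis unfolding offshoot_def using leaf_disjoint inj_skip by (simp add: inj_eq)
  qed
qed

lemma spine_leaves_point:
  assumes c: "c \<in> L u" and "q \<noteq> c"
  shows "\<exists>k. q \<notin> L (spine c u k)"
proof -
  have "c \<in> topspace X" using c leaf_subset_topspace by blast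
  then obtain n where n: "q \<notin> L (seq_take n (address c))" using Inter_leaf_address \<open>q \<noteq> c\<close> by blast
  have "L (spine c u n) \<subseteq> L (seq_take n (address c))"
    unfolding spine_def by (rule leaf_antimono[OF prefix_seq_take]) simp
  then show ?thesis using n by blast
qed

lemma leaf_minus_point:
  assumes c: "c \<in> L u"
  shows "L u - {c} = (\<Union>k i. L (offshoot c u k i))"
proof
  have ct: "c \<in> topspace X" using c leaf_subset_topspace by blast
  show "(\<Union>k i. L (offshoot c u k i)) \<subseteq> L u - {c}"
    using leaf_offshoot_subset leaf_spine_subset[OF c] point_notin_offshoot[OF ct] by blast
  show "L u - {c} \<subseteq> (\<Union>k i. L (offshoot c u k i))"
  proof
    fix q assume q: "q \<in> L u - {c}"
    define k where "k = (LEAST k. q \<notin> L (spine c u k))"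
    have "\<exists>k. q \<notin> L (spine c u k)" using spine_leaves_point[OF c] q by blast
    then have out: "q \<notin> L (spine c u k)" unfolding k_def by (rule LeastI_ex)
    obtain j where kj: "k = Suc j" using out q spine_0[OF c] by (cases k) auto
    have "q \<in> L (spine c u j)" using not_less_Least[of j "\<lambda>k. q \<notin> L (spine c u k)"] kj k_def by auto
    then obtain m where m: "q \<in> L (spine c u j @ [m])" using leaf_split by blast
    have "m \<noteq> address c (length u + j)" using m out kj spine_Suc by auto
    then obtain i where "skip (address c (length u + j)) i = m" using skip_surj by blast
    then have "q \<in> L (offshoot c u j i)" using m unfolding offshoot_def by simp
    then show "q \<in> (\<Union>k i. L (offshoot c u k i))" by blast
  qed
qed

end

section \<open>Removing a countable set\<close>

text \<open>
  A node of the new tree is a stage: an original node \<open>Orig u\<close>, or an auxiliary node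
  \<open>Block x K j\<close> whose leaf is the union of the offshoots \<open>(k, \<langle>K - k, r\<rangle>)\<close> with \<open>j \<le> k \<le> K\<close> of
  the spine of the removed point below \<open>x\<close>, \<open>\<langle>_, _\<rangle>\<close> being \<open>prod_encode\<close>. The blocks
  \<open>Block x K 0\<close> for \<open>K \<in> \<nat>\<close> partition all offshoots; son \<open>0\<close> of \<open>Block x K j\<close> is
  \<open>Block x K (j + 1)\<close>, the others are the offshoots of level \<open>j\<close> in the block.
\<close>

datatype stage = is_orig: Orig "nat list" | Block "nat list" nat nat

locale list_foliage_removal = list_foliage +
  fixes C :: "'a set" and e :: "nat \<Rightarrow> 'a"
  assumes C_subset_range: "C \<subseteq> range e"
begin

definition hit :: "nat list \<Rightarrow> bool" where
  "hit u \<longleftrightarrow> (\<exists>m. e m \<in> C \<inter> L u)"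

definition first_hit :: "nat list \<Rightarrow> nat" where
  "first_hit u = (LEAST m. e m \<in> C \<inter> L u)"

lemma first_hit_mem: "hit u \<Longrightarrow> e (first_hit u) \<in> C \<inter> L u"
  unfolding hit_def first_hit_def by (rule LeastI_ex)

definition offshoots :: "nat list \<Rightarrow> (nat \<times> nat) set \<Rightarrow> 'a set" where
  "offshoots x A = (\<Union>(k, i)\<in>A. L (offshoot (e (first_hit x)) x k i))"

definition block_index :: "nat \<Rightarrow> nat \<Rightarrow> (nat \<times> nat) set" where
  "block_index K j = {(k, prod_encode (K - k, r)) | k r. j \<le> k \<and> k \<le> K}"

definition son_index :: "nat \<Rightarrow> nat \<Rightarrow> nat \<Rightarrow> (nat \<times> nat) set" where
  "son_index K j n =
     (if j < K \<and> n = 0 then block_index K (Suc j)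
      else {(j, prod_encode (K - j, if j < K then n - 1 else n))})"

fun son :: "stage \<Rightarrow> nat \<Rightarrow> stage" where
  "son (Orig u) n = (if hit u then Block u n 0 else Orig (u @ [n]))"
| "son (Block x K j) n =
     (if j < K \<and> n = 0 then Block x K (Suc j)
      else Orig (offshoot (e (first_hit x)) x j (prod_encode (K - j, if j < K then n - 1 else n))))"

fun stage_leaf :: "stage \<Rightarrow> 'a set" where
  "stage_leaf (Orig u) = L u"
| "stage_leaf (Block x K j) = offshoots x (block_index K j)"

text \<open>The original node that a stage lies below.\<close>

fun base :: "stage \<Rightarrow> nat list" where
  "base (Orig u) = u"
| "base (Block x K j) = spine (e (first_hit x)) x j"

fun valid :: "stage \<Rightarrow> bool" where
  "valid (Orig u) = True"
| "valid (Block x K j) = (hit x \<and> j \<le> K)"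

definition stage_of :: "nat list \<Rightarrow> stage" where
  "stage_of w = foldl son (Orig []) w"

lemma stage_of_Nil [simp]: "stage_of [] = Orig []"
  by (simp add: stage_of_def)

lemma stage_of_snoc: "stage_of (w @ [n]) = son (stage_of w) n"
  by (simp add: stage_of_def)

lemma valid_son: "valid s \<Longrightarrow> valid (son s n)"
  by (cases s) auto

lemma valid_stage_of: "valid (stage_of w)"
  by (induction w rule: rev_induct) (auto simp: stage_of_snoc valid_son)

lemma offshoots_UN: "offshoots x (\<Union>n. A n) = (\<Union>n. offshoots x (A n))"
  unfolding offshoots_def by blast

lemma offshoots_UNIV: "offshoots x UNIV = (\<Union>k i. L (offshoot (e (first_hit x)) x k i))"
  unfolding offshoots_def by blast

lemma offshoots_disjoint:
  assumes "A \<inter> B = {}"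
  shows "offshoots x A \<inter> offshoots x B = {}"
proof (rule equals0I)
  fix q assume "q \<in> offshoots x A \<inter> offshoots x B"
  then obtain k i k' i' where "(k, i) \<in> A" "(k', i') \<in> B"
    and "q \<in> L (offshoot (e (first_hit x)) x k i)" "q \<in> L (offshoot (e (first_hit x)) x k' i')"
    unfolding offshoots_def by blast
  then show False using assms leaf_offshoot_disjoint[of k i k' i'] by blast
qed

lemma offshoots_open: "openin X (offshoots x A)"
  unfolding offshoots_def by (rule openin_Union) (auto simp: leaf_open)

lemma UN_block_index: "(\<Union>K. block_index K 0) = UNIV"
proof -
  have "p \<in> (\<Union>K. block_index K 0)" for p
  proof -
    obtain k i where p: "p = (k, i)" by (cases p)
    obtain d r where "prod_decode i = (d, r)" by (cases "prod_decode i")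
    then have "i = prod_encode (d, r)" by (metis prod_decode_inverse)
    then have "p \<in> block_index (k + d) 0" unfolding block_index_def p by auto
    then show ?thesis by blast
  qed
  then show ?thesis by blast
qed

lemma block_index_disjoint: "n \<noteq> m \<Longrightarrow> block_index n 0 \<inter> block_index m 0 = {}"
  unfolding block_index_def by (auto simp: prod_encode_eq)

lemma UN_son_index:
  assumes "j \<le> K"
  shows "(\<Union>n. son_index K j n) = block_index K j"
proof
  show "(\<Union>n. son_index K j n) \<subseteq> block_index K j"
    using assms by (auto simp: son_index_def block_index_def)
  show "block_index K j \<subseteq> (\<Union>n. son_index K j n)"
  proof
    fix p assume "p \<in> block_index K j"
    then obtain k r where p: "p = (k, prod_encode (K - k, r))" "j \<le> k" "k \<le> K"
      unfolding block_index_def by blast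
    consider "j < k" | "k = j" "j < K" | "k = j" "j = K" using p assms by linarith
    then have "p \<in> son_index K j 0 \<or> p \<in> son_index K j (Suc r) \<or> p \<in> son_index K j r"
      by cases (use p in \<open>auto simp: son_index_def block_index_def\<close>)
    then show "p \<in> (\<Union>n. son_index K j n)" by blast
  qed
qed

lemma son_index_disjoint: "n \<noteq> m \<Longrightarrow> son_index K j n \<inter> son_index K j m = {}"
  by (auto simp: son_index_def block_index_def prod_encode_eq)

lemma stage_leaf_son_Block: "stage_leaf (son (Block x K j) n) = offshoots x (son_index K j n)"
  by (simp add: son_index_def offshoots_def)

lemma stage_leaf_subset_base: "valid s \<Longrightarrow> stage_leaf s \<subseteq> L (base s)"
proof (cases s)
  case (Block x K j)
  have "L (offshoot (e (first_hit x)) x k i) \<subseteq> L (spine (e (first_hit x)) x j)" if "j \<le> k" for k i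
    using leaf_offshoot_subset leaf_antimono[OF prefix_spine[OF that]] by blast
  then show ?thesis using Block by (auto simp: offshoots_def block_index_def)
qed simp

lemma stage_leaf_subset_topspace: "valid s \<Longrightarrow> stage_leaf s \<subseteq> topspace X"
  using stage_leaf_subset_base leaf_subset_topspace by blast

lemma stage_leaf_open: "openin X (stage_leaf s)"
  by (cases s) (simp_all add: leaf_open offshoots_open)

lemma base_son:
  assumes "valid s"
  shows "prefix (base s) (base (son s n))"
    and "length (base (son s n)) = length (base s) + (if is_orig s \<and> \<not> is_orig (son s n) then 0 else 1)"
  using assms first_hit_mem by (cases s; auto simp: spine_0 offshoot_def spine_Suc)+

lemma hit_point_notin_son:
  assumes "hit u"
  shows "e (first_hit u) \<notin> stage_leaf (son (Orig u) n)"
proof -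
  have "e (first_hit u) \<in> topspace X" using first_hit_mem[OF assms] leaf_subset_topspace by blast
  then show ?thesis using assms point_notin_offshoot by (auto simp: offshoots_def)
qed

lemma son_leaf_disjoint:
  assumes "valid s" and "n \<noteq> m"
  shows "stage_leaf (son s n) \<inter> stage_leaf (son s m) = {}"
proof (cases s)
  case (Orig u)
  then show ?thesis
    using assms leaf_disjoint block_index_disjoint offshoots_disjoint by auto
next
  case (Block x K j)
  show ?thesis
    unfolding Block stage_leaf_son_Block by (rule offshoots_disjoint[OF son_index_disjoint[OF assms(2)]])
qed

lemma UN_son_leaf_hit:
  assumes "hit u"
  shows "(\<Union>n. stage_leaf (son (Orig u) n)) = L u - {e (first_hit u)}"
proof -
  have "(\<Union>n. stage_leaf (son (Orig u) n)) = offshoots u (\<Union>K. block_index K 0)"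
    using assms by (simp add: offshoots_UN)
  also have "\<dots> = L u - {e (first_hit u)}"
    using leaf_minus_point first_hit_mem[OF assms] by (simp add: UN_block_index offshoots_UNIV)
  finally show ?thesis .
qed

lemma UN_son_leaf:
  assumes "valid s" and "\<nexists>u. s = Orig u \<and> hit u"
  shows "(\<Union>n. stage_leaf (son s n)) = stage_leaf s"
proof (cases s)
  case (Orig u)
  then show ?thesis using assms by (simp add: leaf_split[of u, symmetric])
next
  case (Block x K j)
  then have "j \<le> K" using assms(1) by simp
  have "(\<Union>n. stage_leaf (son s n)) = offshoots x (\<Union>n. son_index K j n)"
    unfolding Block stage_leaf_son_Block offshoots_UN ..
  also have "\<dots> = stage_leaf s" using UN_son_index[OF \<open>j \<le> K\<close>] Block by simp
  finally show ?thesis .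
qed

lemma son_leaf_subset:
  assumes "valid s"
  shows "stage_leaf (son s n) \<subseteq> stage_leaf s"
proof -
  have "stage_leaf (son s n) \<subseteq> (\<Union>n. stage_leaf (son s n))" by blast
  moreover have "(\<Union>n. stage_leaf (son s n)) \<subseteq> stage_leaf s"
  proof (cases "\<exists>u. s = Orig u \<and> hit u")
    case True
    then obtain u where "s = Orig u" "hit u" by blast
    then show ?thesis using UN_son_leaf_hit by auto
  next
    case False
    then show ?thesis using UN_son_leaf[OF assms False] by simp
  qed
  ultimately show ?thesis by blast
qed

lemma stage_leaf_minus_C:
  assumes "valid s"
  shows "stage_leaf s - C = (\<Union>n. stage_leaf (son s n)) - C"
proof (cases "\<exists>u. s = Orig u \<and> hit u")
  case True
  then obtain u where "s = Orig u" "hit u" by blast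
  then show ?thesis using UN_son_leaf_hit first_hit_mem by auto
next
  case False
  then show ?thesis using UN_son_leaf[OF assms False] by simp
qed

definition stage_seq :: "(nat \<Rightarrow> nat) \<Rightarrow> nat \<Rightarrow> stage" where
  "stage_seq \<alpha> n = stage_of (seq_take n \<alpha>)"

lemma stage_seq_Suc: "stage_seq \<alpha> (Suc n) = son (stage_seq \<alpha> n) (\<alpha> n)"
  by (simp add: stage_seq_def seq_take_Suc stage_of_snoc)

lemma valid_stage_seq: "valid (stage_seq \<alpha> n)"
  by (simp add: stage_seq_def valid_stage_of)

lemma stage_seq_leaf_antimono: "n \<le> m \<Longrightarrow> stage_leaf (stage_seq \<alpha> m) \<subseteq> stage_leaf (stage_seq \<alpha> n)"
proof (induction m rule: dec_induct)
  case (step m)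
  have "stage_leaf (stage_seq \<alpha> (Suc m)) \<subseteq> stage_leaf (stage_seq \<alpha> m)"
    unfolding stage_seq_Suc by (rule son_leaf_subset[OF valid_stage_seq])
  with step.IH show ?case by blast
qed simp

lemma prefix_base_stage_seq: "n \<le> m \<Longrightarrow> prefix (base (stage_seq \<alpha> n)) (base (stage_seq \<alpha> m))"
proof (induction m rule: dec_induct)
  case (step m)
  have "prefix (base (stage_seq \<alpha> m)) (base (stage_seq \<alpha> (Suc m)))"
    unfolding stage_seq_Suc by (rule base_son(1)[OF valid_stage_seq])
  with step.IH show ?case by (rule prefix_order.trans)
qed simp

text \<open>Blocks are entered only from original nodes, so the base grows at least every second step.\<close>

lemma length_base_stage_seq: "n \<le> length (base (stage_seq \<alpha> (2 * n)))"
proof (induction n)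
  case (Suc n)
  have "stage_seq \<alpha> (2 * Suc n) = son (son (stage_seq \<alpha> (2 * n)) (\<alpha> (2 * n))) (\<alpha> (Suc (2 * n)))"
    by (simp add: stage_seq_Suc[symmetric])
  then show ?case
    using Suc base_son(2)[OF valid_stage_seq] base_son(2)[OF valid_son[OF valid_stage_seq]]
    by (auto split: if_splits)
qed simp

lemma Block_stage_seq_orig:
  "stage_seq \<alpha> n = Block x K j \<Longrightarrow> j \<le> K \<Longrightarrow> \<exists>m\<ge>n. is_orig (stage_seq \<alpha> m)"
proof (induction "K - j" arbitrary: n j rule: less_induct)
  case less
  show ?case
  proof (cases "j < K \<and> \<alpha> n = 0")
    case True
    then have "stage_seq \<alpha> (Suc n) = Block x K (Suc j)" using less.prems by (simp add: stage_seq_Suc)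
    moreover have "K - Suc j < K - j" using True by arith
    ultimately obtain m where "m \<ge> Suc n" "is_orig (stage_seq \<alpha> m)"
      using less.hyps[of "Suc j" "Suc n"] True by auto
    then show ?thesis by (intro exI[of _ m]) simp
  next
    case False
    then have "is_orig (stage_seq \<alpha> (Suc n))" using less.prems by (auto simp: stage_seq_Suc)
    then show ?thesis by (intro exI[of _ "Suc n"]) simp
  qed
qed

lemma stage_seq_orig_frequently: "\<exists>m\<ge>n. is_orig (stage_seq \<alpha> m)"
proof (cases "stage_seq \<alpha> n")
  case (Block x K j)
  then show ?thesis using Block_stage_seq_orig valid_stage_seq[of \<alpha> n] by simp
qed auto

lemma base_stage_seq_limit:
  obtains \<beta> where "\<And>m. base (stage_seq \<alpha> m) = seq_take (length (base (stage_seq \<alpha> m))) \<beta>"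
proof -
  let ?B = "range (\<lambda>m. base (stage_seq \<alpha> m))"
  have "\<forall>x\<in>?B. \<forall>y\<in>?B. x \<noteq> y \<longrightarrow> strict_prefix x y \<or> strict_prefix y x"
  proof (intro ballI impI)
    fix x y assume "x \<in> ?B" "y \<in> ?B" "x \<noteq> y"
    then obtain n m where nm: "x = base (stage_seq \<alpha> n)" "y = base (stage_seq \<alpha> m)" by blast
    have "prefix x y \<or> prefix y x"
    proof (cases "n \<le> m")
      case True
      then show ?thesis using prefix_base_stage_seq[OF True, of \<alpha>] nm by simp
    next
      case False
      then show ?thesis using prefix_base_stage_seq[of m n \<alpha>] nm by simp
    qed
    then show "strict_prefix x y \<or> strict_prefix y x" using \<open>x \<noteq> y\<close> by (auto simp: strict_prefix_def)
  qed
  then obtain \<beta> where \<beta>: "\<forall>v\<in>?B. v = seq_take (length v) \<beta>" by (rule chain_eq_seq_take)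
  show thesis
  proof (rule that)
    show "base (stage_seq \<alpha> m) = seq_take (length (base (stage_seq \<alpha> m))) \<beta>" for m
      by (rule bspec[OF \<beta> rangeI[of "\<lambda>m. base (stage_seq \<alpha> m)" m]])
  qed
qed

lemma Inter_stage_seq: "\<exists>p. (\<Inter>n. stage_leaf (stage_seq \<alpha> n)) = {p}"
proof -
  obtain \<beta> where \<beta>: "\<And>m. base (stage_seq \<alpha> m) = seq_take (length (base (stage_seq \<alpha> m))) \<beta>"
    using base_stage_seq_limit by blast
  obtain p where p: "(\<Inter>n. L (seq_take n \<beta>)) = {p}" using branch_singleton by blast
  have "p \<in> stage_leaf (stage_seq \<alpha> n)" for n
  proof -
    obtain m where m: "m \<ge> n" "is_orig (stage_seq \<alpha> m)" using stage_seq_orig_frequently by blast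
    have "p \<in> L (base (stage_seq \<alpha> m))" using p by (subst \<beta>) blast
    then have "p \<in> stage_leaf (stage_seq \<alpha> m)" using m(2) by (cases "stage_seq \<alpha> m") auto
    then show ?thesis using stage_seq_leaf_antimono[OF m(1)] by blast
  qed
  moreover have "q = p" if q: "q \<in> (\<Inter>n. stage_leaf (stage_seq \<alpha> n))" for q
  proof -
    have "q \<in> L (seq_take i \<beta>)" for i
    proof -
      have "q \<in> L (base (stage_seq \<alpha> (2 * i)))"
        using q stage_leaf_subset_base[OF valid_stage_seq] by blast
      moreover have "prefix (seq_take i \<beta>) (base (stage_seq \<alpha> (2 * i)))"
        using prefix_seq_take[OF length_base_stage_seq] by (subst \<beta>)
      ultimately show ?thesis using leaf_antimono by blast
    qed
    then show ?thesis using p by blast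
  qed
  ultimately show ?thesis by blast
qed

text \<open>The point \<open>e k\<close> is cut out at the latest when the branch reaches, after all \<open>e k'\<close> with
  \<open>k' < k\<close> are gone, an original node containing it.\<close>

lemma stage_seq_avoids: "\<exists>m. \<forall>k'<k. e k' \<notin> C \<inter> stage_leaf (stage_seq \<alpha> m)"
proof (induction k)
  case (Suc k)
  then obtain m where m: "\<forall>k'<k. e k' \<notin> C \<inter> stage_leaf (stage_seq \<alpha> m)" by blast
  obtain m' u where m': "m' \<ge> m" "stage_seq \<alpha> m' = Orig u"
    using stage_seq_orig_frequently by (metis stage.collapse(1))
  have before: "\<forall>k'<k. e k' \<notin> C \<inter> L u" using m stage_seq_leaf_antimono[OF m'(1), of \<alpha>] m'(2) by auto
  show ?case
  proof (cases "e k \<in> C \<inter> L u")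
    case False
    then show ?thesis using before m'(2) by (intro exI[of _ m']) (auto simp: less_Suc_eq)
  next
    case True
    then have hit: "hit u" unfolding hit_def by blast
    have "first_hit u \<le> k" unfolding first_hit_def by (rule Least_le) (rule True)
    moreover have "\<not> first_hit u < k" using before first_hit_mem[OF hit] by blast
    ultimately have "first_hit u = k" by simp
    then have "e k \<notin> stage_leaf (stage_seq \<alpha> (Suc m'))"
      using hit_point_notin_son[OF hit] m'(2) by (simp add: stage_seq_Suc)
    moreover have "stage_leaf (stage_seq \<alpha> (Suc m')) \<subseteq> L u"
      using stage_seq_leaf_antimono[of m' "Suc m'" \<alpha>] m'(2) by simp
    ultimately show ?thesis using before by (intro exI[of _ "Suc m'"]) (auto simp: less_Suc_eq)
  qed
qed simp

lemma Inter_stage_seq_minus_C: "\<exists>p. (\<Inter>n. stage_leaf (stage_seq \<alpha> n) - C) = {p}"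
proof -
  obtain p where p: "(\<Inter>n. stage_leaf (stage_seq \<alpha> n)) = {p}" using Inter_stage_seq by blast
  have "p \<notin> C"
  proof
    assume "p \<in> C"
    then obtain k where k: "p = e k" using C_subset_range by blast
    obtain m where "\<forall>k'<Suc k. e k' \<notin> C \<inter> stage_leaf (stage_seq \<alpha> m)" using stage_seq_avoids by blast
    then show False using k p \<open>p \<in> C\<close> by blast
  qed
  then have "(\<Inter>n. stage_leaf (stage_seq \<alpha> n) - C) = {p}" using p by blast
  then show ?thesis ..
qed

lemma Block_sons_cofinite:
  assumes "valid (Block x K j)" and u: "spine (e (first_hit x)) x j = u" and "finite F"
    and F: "\<forall>n. n \<notin> F \<longrightarrow> L (u @ [n]) \<subseteq> U"
  shows "\<exists>G. finite G \<and> (\<forall>n. n \<notin> G \<longrightarrow> stage_leaf (son (Block x K j) n) \<subseteq> U)"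
proof -
  define h where "h r = skip (address (e (first_hit x)) (length x + j)) (prod_encode (K - j, r))" for r
  have son: "son (Block x K j) n = Orig (u @ [h (if j < K then n - 1 else n)])"
    if "\<not> (j < K \<and> n = 0)" for n
    using that u by (simp add: h_def offshoot_def)
  have "inj h" unfolding h_def inj_def using inj_skip by (auto simp: inj_eq prod_encode_eq)
  then have fin: "finite (h -` F)" using \<open>finite F\<close> by (simp add: finite_vimageI)
  define G where "G = {0} \<union> h -` F \<union> Suc ` h -` F"
  have "stage_leaf (son (Block x K j) n) \<subseteq> U" if n: "n \<notin> G" for n
  proof (cases "j < K")
    case True
    then obtain r where r: "n = Suc r" "h r \<notin> F" using n unfolding G_def by (cases n) auto
    then have "son (Block x K j) n = Orig (u @ [h r])" using son[of n] True by (simp del: son.simps)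
    then show ?thesis using F r(2) by simp
  next
    case False
    then have "son (Block x K j) n = Orig (u @ [h n])" using son[of n] by (simp del: son.simps)
    then show ?thesis using F n unfolding G_def by simp
  qed
  moreover have "finite G" using fin unfolding G_def by simp
  ultimately show ?thesis by blast
qed

text \<open>A step from a stage whose base is a proper prefix of \<open>u\<close> lengthens the base, unless it
  enters a block, which happens only from an original node; either way this measure drops.\<close>

definition descent_measure :: "nat list \<Rightarrow> stage \<Rightarrow> nat" where
  "descent_measure u s = 2 * (length u - length (base s)) + (if is_orig s then 1 else 0)"

lemma growth_stage:
  assumes "valid s" and "base s = u" and "\<nexists>v. s = Orig v \<and> hit v"
    and "finite F" and "\<forall>n. n \<notin> F \<longrightarrow> L (u @ [n]) \<subseteq> U"
  shows "\<exists>G. finite G \<and> (\<forall>n. n \<notin> G \<longrightarrow> stage_leaf (son s n) \<subseteq> U)"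
proof (cases s)
  case (Orig v)
  then show ?thesis using assms by auto
next
  case (Block x K j)
  then show ?thesis using assms Block_sons_cofinite by simp
qed

lemma descent_step:
  assumes "valid s" and p: "p \<in> stage_leaf s - C" and "p \<in> L u" and "prefix (base s) u"
    and "base s \<noteq> u \<or> (\<exists>v. s = Orig v \<and> hit v)"
  obtains n where "p \<in> stage_leaf (son s n) - C" and "prefix (base (son s n)) u"
    and "descent_measure u (son s n) < descent_measure u s"
proof -
  obtain n where n: "p \<in> stage_leaf (son s n) - C" using p stage_leaf_minus_C[OF assms(1)] by blast
  have len: "length (base (son s n)) \<le> length u"
  proof (cases "base s = u")
    case True
    then obtain v where "s = Orig v" "hit v" using assms(5) by blast
    then show ?thesis using True first_hit_mem spine_0 by simp
  next
    case False
    then have "length (base s) < length u" using assms(4) prefix_length_less strict_prefix_def by blast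
    then show ?thesis using base_son(2)[OF assms(1), of n] by simp
  qed
  have "p \<in> L (base (son s n))" using n stage_leaf_subset_base[OF valid_son[OF assms(1)]] by blast
  then have "prefix (base (son s n)) u \<or> prefix u (base (son s n))"
    using leaf_comparable[OF _ \<open>p \<in> L u\<close>] by blast
  then have pre: "prefix (base (son s n)) u"
    using prefix_length_prefix[OF prefix_order.refl[of "base (son s n)"] _ len] by blast
  have "descent_measure u (son s n) < descent_measure u s"
    using base_son(2)[OF assms(1), of n] len assms(5) pre prefix_length_le[OF assms(4)]
    by (cases s) (auto simp: descent_measure_def spine_0 first_hit_mem split: if_splits)
  then show thesis using that n pre by blast
qed

lemma reach_growth_stage:
  assumes "p \<in> L u" and "finite F" and "\<forall>n. n \<notin> F \<longrightarrow> L (u @ [n]) \<subseteq> U"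
  shows "p \<in> stage_leaf (stage_of w) - C \<Longrightarrow> prefix (base (stage_of w)) u \<Longrightarrow>
    \<exists>w'. p \<in> stage_leaf (stage_of w') - C \<and>
      (\<exists>G. finite G \<and> (\<forall>n. n \<notin> G \<longrightarrow> stage_leaf (son (stage_of w') n) \<subseteq> U))"
proof (induction "descent_measure u (stage_of w)" arbitrary: w rule: less_induct)
  case less
  show ?case
  proof (cases "base (stage_of w) \<noteq> u \<or> (\<exists>v. stage_of w = Orig v \<and> hit v)")
    case True
    then obtain n where "p \<in> stage_leaf (son (stage_of w) n) - C"
      and "prefix (base (son (stage_of w) n)) u"
      and "descent_measure u (son (stage_of w) n) < descent_measure u (stage_of w)"
      using descent_step[OF valid_stage_of less.prems(1) assms(1) less.prems(2)] by blast
    then show ?thesis using less.hyps[of "w @ [n]"] by (simp add: stage_of_snoc)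
  next
    case False
    then show ?thesis using less.prems growth_stage[OF valid_stage_of _ _ assms(2,3)] by blast
  qed
qed

definition new_leaf :: "nat list \<Rightarrow> 'a set" where
  "new_leaf w = stage_leaf (stage_of w) - C"

lemma new_leaf_snoc: "new_leaf (w @ [n]) = stage_leaf (son (stage_of w) n) - C"
  by (simp add: new_leaf_def stage_of_snoc)

lemma new_leaf_stage_seq: "new_leaf (seq_take n \<alpha>) = stage_leaf (stage_seq \<alpha> n) - C"
  by (simp add: new_leaf_def stage_seq_def)

lemma new_leaf_nonempty: "new_leaf w \<noteq> {}"
proof -
  from Inter_stage_seq_minus_C[of "(!) w"]
  obtain p where p: "(\<Inter>n. stage_leaf (stage_seq ((!) w) n) - C) = {p}" ..
  have "p \<in> (\<Inter>n. stage_leaf (stage_seq ((!) w) n) - C)" unfolding p by (rule singletonI)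
  then have "p \<in> stage_leaf (stage_seq ((!) w) (length w)) - C" by (rule INT_D) (rule UNIV_I)
  moreover have "new_leaf w = stage_leaf (stage_seq ((!) w) (length w)) - C"
    using new_leaf_stage_seq[of "length w" "(!) w"] unfolding seq_take_nth .
  ultimately show ?thesis by blast
qed

lemma baire_foliage_tree_new_leaf:
  "baire_foliage_tree (subtopology X (topspace X - C)) UNIV strict_prefix new_leaf"
  unfolding baire_foliage_tree_def
proof (intro conjI ballI allI impI)
  show "is_tree (UNIV :: nat list set) strict_prefix" by (rule is_tree_strict_prefix)
  show "\<exists>f :: nat list \<Rightarrow> nat list. bij_betw f UNIV UNIV \<and> (\<forall>u v. strict_prefix (f u) (f v) \<longleftrightarrow> strict_prefix u v)"
    by (intro exI[of _ id]) simp
  show "openin (subtopology X (topspace X - C)) (new_leaf w)" for w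
    unfolding openin_subtopology new_leaf_def
    using stage_leaf_subset_topspace[OF valid_stage_of, of w]
    by (intro exI[of _ "stage_leaf (stage_of w)"]) (auto simp: stage_leaf_open)
  show "new_leaf w = (\<Union>s\<in>sons UNIV strict_prefix w. new_leaf s)" for w
  proof -
    have "new_leaf w = (\<Union>n. stage_leaf (son (stage_of w) n)) - C"
      unfolding new_leaf_def by (rule stage_leaf_minus_C[OF valid_stage_of])
    also have "\<dots> = (\<Union>n. new_leaf (w @ [n]))" unfolding new_leaf_snoc by blast
    finally show ?thesis by (simp add: sons_strict_prefix image_image)
  qed
  show "disjoint_family_on new_leaf (sons UNIV strict_prefix w)" for w
    using son_leaf_disjoint[OF valid_stage_of]
    by (auto simp: sons_strict_prefix disjoint_family_on_def new_leaf_snoc)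
  show "\<exists>p. fruit new_leaf B = {p}" if B: "branch UNIV strict_prefix B" for B
  proof -
    obtain \<alpha> where "B = range (\<lambda>n. seq_take n \<alpha>)" using branch_strict_prefix[OF B] by blast
    then show ?thesis using Inter_stage_seq_minus_C by (simp add: fruit_def new_leaf_stage_seq)
  qed
  show "new_leaf w = topspace (subtopology X (topspace X - C))"
    if "\<forall>v\<in>UNIV. v \<noteq> w \<longrightarrow> strict_prefix w v" for w
  proof -
    have "w = []"
    proof (rule ccontr)
      assume "w \<noteq> []"
      then have "strict_prefix w []" using that[rule_format, of "[]"] by simp
      then show False by simp
    qed
    then show ?thesis by (auto simp: new_leaf_def leaf_root)
  qed
qed

lemma grows_into_new_leaf: "grows_into (subtopology X (topspace X - C)) UNIV strict_prefix new_leaf"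
  unfolding grows_into_def
proof (intro ballI allI impI)
  fix p W assume "p \<in> topspace (subtopology X (topspace X - C))"
    and W: "openin (subtopology X (topspace X - C)) W \<and> p \<in> W"
  then obtain U where U: "openin X U" "W = U \<inter> (topspace X - C)" and p: "p \<in> U - C"
    unfolding openin_subtopology by auto
  obtain u F where uF: "p \<in> L u" "finite F" "\<forall>n. n \<notin> F \<longrightarrow> L (u @ [n]) \<subseteq> U"
    using leaf_grows[OF U(1)] p by blast
  have "p \<in> stage_leaf (stage_of []) - C" using p U leaf_root by (auto dest: openin_subset)
  moreover have "prefix (base (stage_of [])) u" by simp
  ultimately obtain w G where w: "p \<in> new_leaf w" and G: "finite G"
      "\<forall>n. n \<notin> G \<longrightarrow> stage_leaf (son (stage_of w) n) \<subseteq> U"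
    using reach_growth_stage[OF uF, of "[]"] unfolding new_leaf_def by blast
  define S where "S = (\<Union>n\<in>-G. new_leaf (w @ [n]))"
  have "S \<in> shoot UNIV strict_prefix new_leaf w"
  proof -
    have "sons UNIV strict_prefix w - (\<lambda>n. w @ [n]) ` (- G) \<subseteq> (\<lambda>n. w @ [n]) ` G"
      by (auto simp: sons_strict_prefix)
    then have "finite (sons UNIV strict_prefix w - (\<lambda>n. w @ [n]) ` (- G))"
      using G(1) finite_subset by blast
    then show ?thesis unfolding shoot_def S_def
      by (intro CollectI exI[of _ "(\<lambda>n. w @ [n]) ` (- G)"]) (auto simp: sons_strict_prefix image_image)
  qed
  moreover have "S \<noteq> {}"
    using ex_new_if_finite[OF infinite_UNIV_nat G(1)] new_leaf_nonempty unfolding S_def by blast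
  moreover have "S \<subseteq> W"
    using G(2) stage_leaf_subset_topspace[OF valid_son[OF valid_stage_of]]
    unfolding S_def U(2) new_leaf_snoc by blast
  ultimately have "shoot UNIV strict_prefix new_leaf w \<ggreater> {W}" unfolding refines_def by blast
  moreover have "w \<in> scope UNIV new_leaf p" using w by (simp add: scope_def)
  ultimately show "\<exists>z\<in>scope UNIV new_leaf p. shoot UNIV strict_prefix new_leaf z \<ggreater> {W}" by blast
qed

lemma pi_tree_new_leaf: "pi_tree (subtopology X (topspace X - C)) UNIV strict_prefix new_leaf"
  unfolding pi_tree_def using baire_foliage_tree_new_leaf grows_into_new_leaf by blast

end

section \<open>Transfer to abstract \<open>\<pi>\<close>-trees\<close>

lemma branch_seq_take: "branch UNIV strict_prefix (range (\<lambda>n. seq_take n \<alpha>))"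
  unfolding branch_def
proof (intro conjI allI impI)
  show "\<forall>x\<in>range (\<lambda>n. seq_take n \<alpha>). \<forall>y\<in>range (\<lambda>n. seq_take n \<alpha>).
      x \<noteq> y \<longrightarrow> strict_prefix x y \<or> strict_prefix y x"
    using chain_seq_take by blast
  show "range (\<lambda>n. seq_take n \<alpha>) \<subseteq> UNIV" by simp
  fix B' assume H: "range (\<lambda>n. seq_take n \<alpha>) \<subseteq> B' \<and> B' \<subseteq> UNIV \<and>
    (\<forall>x\<in>B'. \<forall>y\<in>B'. x \<noteq> y \<longrightarrow> strict_prefix x y \<or> strict_prefix y x)"
  then have chain: "\<forall>x\<in>B'. \<forall>y\<in>B'. x \<noteq> y \<longrightarrow> strict_prefix x y \<or> strict_prefix y x" by blast
  have "v \<in> range (\<lambda>n. seq_take n \<alpha>)" if v: "v \<in> B'" for v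
  proof -
    have on_branch: "seq_take (length v) \<alpha> \<in> B'" by (rule subsetD[OF conjunct1[OF H]]) simp
    have "v = seq_take (length v) \<alpha>"
    proof (rule ccontr)
      assume "v \<noteq> seq_take (length v) \<alpha>"
      from chain[rule_format, OF v on_branch this] show False by (auto dest: prefix_length_less)
    qed
    then show ?thesis by (rule ssubst) (rule rangeI)
  qed
  then have "B' \<subseteq> range (\<lambda>n. seq_take n \<alpha>)" by (rule subsetI)
  then show "B' = range (\<lambda>n. seq_take n \<alpha>)" using conjunct1[OF H] by (rule equalityI)
qed

lemma branch_iso:
  assumes Q: "Q = range f" and "inj f" and iso: "\<And>u v. lt (f u) (f v) \<longleftrightarrow> strict_prefix u v"
    and B: "branch UNIV strict_prefix B"
  shows "branch Q lt (f ` B)"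
proof -
  have chain_iff: "(\<forall>x\<in>f ` A. \<forall>y\<in>f ` A. x \<noteq> y \<longrightarrow> lt x y \<or> lt y x) \<longleftrightarrow>
      (\<forall>x\<in>A. \<forall>y\<in>A. x \<noteq> y \<longrightarrow> strict_prefix x y \<or> strict_prefix y x)" for A
    using \<open>inj f\<close> by (simp add: iso inj_eq)
  have chain: "\<forall>x\<in>B. \<forall>y\<in>B. x \<noteq> y \<longrightarrow> strict_prefix x y \<or> strict_prefix y x"
    using B unfolding branch_def by (rule conjunct1[OF conjunct2])
  have maximal: "\<forall>A. B \<subseteq> A \<and> A \<subseteq> UNIV \<and>
      (\<forall>x\<in>A. \<forall>y\<in>A. x \<noteq> y \<longrightarrow> strict_prefix x y \<or> strict_prefix y x) \<longrightarrow> A = B"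
    using B unfolding branch_def by (rule conjunct2[OF conjunct2])
  show ?thesis
    unfolding branch_def
  proof (intro conjI allI impI)
    show "f ` B \<subseteq> Q" using Q by blast
    show "\<forall>x\<in>f ` B. \<forall>y\<in>f ` B. x \<noteq> y \<longrightarrow> lt x y \<or> lt y x"
      unfolding chain_iff by (rule chain)
    fix B' assume H: "f ` B \<subseteq> B' \<and> B' \<subseteq> Q \<and> (\<forall>x\<in>B'. \<forall>y\<in>B'. x \<noteq> y \<longrightarrow> lt x y \<or> lt y x)"
    then have B': "f ` (f -` B') = B'" unfolding image_vimage_eq Q by (simp add: Int_absorb2)
    have "f -` B' = B"
    proof (rule maximal[rule_format], intro conjI)
      show "B \<subseteq> f -` B'" using conjunct1[OF H] by blast
      show "f -` B' \<subseteq> UNIV" by simp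
      show "\<forall>x\<in>f -` B'. \<forall>y\<in>f -` B'. x \<noteq> y \<longrightarrow> strict_prefix x y \<or> strict_prefix y x"
        using conjunct2[OF conjunct2[OF H]] unfolding chain_iff[of "f -` B'", symmetric] B' .
    qed
    then show "B' = f ` B" using B' by simp
  qed
qed

lemma sons_iso:
  assumes Q: "Q = range f" and iso: "\<And>u v. lt (f u) (f v) \<longleftrightarrow> strict_prefix u v"
  shows "sons Q lt (f u) = f ` sons UNIV strict_prefix u"
  unfolding sons_def Q by (auto simp: iso)

locale list_indexed_pi_tree =
  fixes X :: "'a topology" and Q :: "'n set" and lt :: "'n \<Rightarrow> 'n \<Rightarrow> bool"
    and l :: "'n \<Rightarrow> 'a set" and f :: "nat list \<Rightarrow> 'n"
  assumes pi_tree: "pi_tree X Q lt l"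
    and bij: "bij_betw f UNIV Q"
    and iso: "lt (f u) (f v) \<longleftrightarrow> strict_prefix u v"
begin

lemma Q_range: "Q = range f"
  using bij by (simp add: bij_betw_def)

lemma inj_f: "inj f"
  using bij by (simp add: bij_betw_def)

lemma sons_f: "sons Q lt (f u) = range (\<lambda>n. f (u @ [n]))"
  using sons_iso[OF Q_range iso] by (simp add: sons_strict_prefix image_image)

lemma leaf_open: "x \<in> Q \<Longrightarrow> openin X (l x)"
  using pi_tree unfolding pi_tree_def baire_foliage_tree_def by (elim conjE) blast

lemma locally_strict:
  "x \<in> Q \<Longrightarrow> \<exists>y\<in>Q. lt x y \<Longrightarrow> l x = (\<Union>s\<in>sons Q lt x. l s) \<and> disjoint_family_on l (sons Q lt x)"
  using pi_tree unfolding pi_tree_def baire_foliage_tree_def by (elim conjE) blast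

lemma branch_fruit: "branch Q lt B \<Longrightarrow> \<exists>p. fruit l B = {p}"
  using pi_tree unfolding pi_tree_def baire_foliage_tree_def by (elim conjE) blast

lemma root_leaf: "x \<in> Q \<Longrightarrow> \<forall>y\<in>Q. y \<noteq> x \<longrightarrow> lt x y \<Longrightarrow> l x = topspace X"
  using pi_tree unfolding pi_tree_def baire_foliage_tree_def by (elim conjE) blast

lemma grows_into: "grows_into X Q lt l"
  using pi_tree unfolding pi_tree_def by blast

lemma leaf_f_split: "l (f u) = (\<Union>n. l (f (u @ [n]))) \<and> disjoint_family_on l (range (\<lambda>n. f (u @ [n])))"
proof -
  have "f (u @ [0]) \<in> Q" "lt (f u) (f (u @ [0]))" using Q_range by (auto simp: iso strict_prefix_def)
  then have "l (f u) = (\<Union>s\<in>sons Q lt (f u). l s) \<and> disjoint_family_on l (sons Q lt (f u))"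
    using Q_range by (intro locally_strict) auto
  then show ?thesis unfolding sons_f by (simp add: image_image)
qed

sublocale list_foliage X "l \<circ> f"
proof
  show "openin X ((l \<circ> f) u)" for u
    using leaf_open Q_range by simp
  show "(l \<circ> f) [] = topspace X"
  proof -
    have "lt (f []) y" if "y \<in> Q" "y \<noteq> f []" for y
      using that Q_range by (auto simp: iso strict_prefix_def)
    then show ?thesis using root_leaf Q_range by simp
  qed
  show "(l \<circ> f) u = (\<Union>n. (l \<circ> f) (u @ [n]))" for u
    unfolding comp_apply by (rule conjunct1[OF leaf_f_split])
  show "(l \<circ> f) (u @ [n]) \<inter> (l \<circ> f) (u @ [m]) = {}" if "n \<noteq> m" for u n m
    using conjunct2[OF leaf_f_split[of u]] inj_f that unfolding disjoint_family_on_def by (auto simp: inj_eq)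
  show "\<exists>p. (\<Inter>n. (l \<circ> f) (seq_take n \<alpha>)) = {p}" for \<alpha>
  proof -
    have "branch Q lt (f ` range (\<lambda>n. seq_take n \<alpha>))"
      by (rule branch_iso[OF Q_range inj_f iso branch_seq_take])
    then obtain p where "fruit l (f ` range (\<lambda>n. seq_take n \<alpha>)) = {p}"
      using branch_fruit by blast
    then have "(\<Inter>n. (l \<circ> f) (seq_take n \<alpha>)) = {p}" by (simp add: fruit_def image_image)
    then show ?thesis ..
  qed
  show "\<exists>u F. p \<in> (l \<circ> f) u \<and> finite F \<and> (\<forall>n. n \<notin> F \<longrightarrow> (l \<circ> f) (u @ [n]) \<subseteq> U)"
    if U: "openin X U" and p: "p \<in> U" for U p
  proof -
    obtain z where z: "z \<in> scope Q l p" "shoot Q lt l z \<ggreater> {U}"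
      using grows_into U p openin_subset unfolding grows_into_def by blast
    obtain u where u: "z = f u" using z(1) Q_range unfolding scope_def by blast
    obtain G where "G \<in> shoot Q lt l z" "G \<noteq> {}" "G \<subseteq> U"
      using z(2) p unfolding refines_def by blast
    then obtain S where S: "(\<Union>s\<in>S. l s) \<subseteq> U" "S \<subseteq> sons Q lt z" "finite (sons Q lt z - S)"
      unfolding shoot_def by blast
    define F where "F = (\<lambda>n. f (u @ [n])) -` (sons Q lt z - S)"
    have "inj (\<lambda>n. f (u @ [n]))" using inj_f by (auto simp: inj_def)
    then have "finite F" unfolding F_def using S(3) by (simp add: finite_vimageI)
    moreover have "(l \<circ> f) (u @ [n]) \<subseteq> U" if "n \<notin> F" for n
      using that S(1) unfolding F_def u sons_f by auto
    ultimately show ?thesis using z(1) u unfolding scope_def by auto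
  qed
qed

end

theorem mainTheorem2:
  fixes X :: "'a topology" and C :: "'a set"
  assumes "has_pi_tree X"
    and "C \<subseteq> topspace X"
    and "countable C"
  shows "has_pi_tree (subtopology X (topspace X - C))"
proof -
  obtain Q :: "nat list set" and lt l where pi: "pi_tree X Q lt l"
    using assms(1) unfolding has_pi_tree_def by blast
  then obtain f :: "nat list \<Rightarrow> nat list"
    where "bij_betw f UNIV Q" and "\<And>u v. lt (f u) (f v) \<longleftrightarrow> strict_prefix u v"
    unfolding pi_tree_def baire_foliage_tree_def by blast
  with pi interpret list_indexed_pi_tree X Q lt l f
    by unfold_locales
  interpret list_foliage_removal X "l \<circ> f" C "from_nat_into C"
    by unfold_locales (rule subset_range_from_nat_into[OF assms(3)])
  show ?thesis
    using pi_tree_new_leaf unfolding has_pi_tree_def by blast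
qed

end
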